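(* Let $\mathcal{A}=(Q,\delta,I,F)$ be a complete Büchi automaton and let $p,q\in Q$ with $p\preceq_{\mathit{de}}q$. Let $L_\top=\{w\in\Sigma^*\mid p\overset{w}{\leadsto}_F q\}$ and $L_\bot=\{w\in\Sigma^*\mid p\overset{w}{\leadsto}q\}$. Then $\mathcal{L}(q)\supseteq(L_\bot^*L_\top)^\omega$.
   Context: A Büchi automaton is $\mathcal{A}=(Q,\delta,I,F)$ over a finite alphabet $\Sigma$ with $\delta:Q\times\Sigma\to2^Q$, complete if $\delta(q,a)\neq\emptyset$ always. A run from $q$ on $\alpha=\alpha_0\alpha_1\cdots$ is $\rho$ with $\rho_0=q$, $\rho_{i+1}\in\delta(\rho_i,\alpha_i)$; it is accepting if some state of $F$ occurs infinitely often. $\mathcal{L}(q)$ is the set of infinite words with an accepting run from $q$. For $w\in\Sigma^*$, $p\overset{w}{\leadsto}q$ means $q$ is reachable from $p$ by a path reading $w$, and $p\overset{w}{\leadsto}_F q$ means there is such a path that contains an accepting state. For $L\subseteq\Sigma^*$: $L^*$ is the set of finite concatenations of words of $L$, $L_1L_2=\{w_1w_2\mid w_i\in L_i\}$, and $L^\omega=\{w_1w_2\cdots\in\Sigma^\omega\mid w_i\in L\}$. Delayed simulation: in the game from $(p_0,r_0)$, in round $i$ Spoiler picks $p_i\xrightarrow{\alpha_i}p_{i+1}$ and Duplicator answers $r_i\xrightarrow{\alpha_i}r_{i+1}$; a Duplicator strategy is a map $\sigma$ with $\sigma(r,p\xrightarrow{a}p')\in\delta(r,a)$ (no lookahead). Duplicator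 wins if for all $i$, $p_i\in F$ implies $r_k\in F$ for some $k\ge i$. $p\preceq_{\mathit{de}}r$ iff Duplicator has a winning strategy from $(p,r)$. *)

theory Defs
  imports "HOL-Library.Omega_Words_Fun"
begin

text \<open>The state set Q is UNIV :: 'q set, delta :: 'q => 'a => 'q set, F the accepting states.
  (Initial states play no role in the statement.)\<close>

definition complete_aut :: "('q \<Rightarrow> 'a \<Rightarrow> 'q set) \<Rightarrow> bool" where
  "complete_aut \<delta> \<longleftrightarrow> (\<forall>q a. \<delta> q a \<noteq> {})"

definition is_run :: "('q \<Rightarrow> 'a \<Rightarrow> 'q set) \<Rightarrow> 'q \<Rightarrow> 'a word \<Rightarrow> 'q word \<Rightarrow> bool" where
  "is_run \<delta> q \<alpha> \<rho> \<longleftrightarrow> \<rho> 0 = q \<and> (\<forall>i. \<rho> (Suc i) \<in> \<delta> (\<rho> i) (\<alpha> i))"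

definition accepting :: "'q set \<Rightarrow> 'q word \<Rightarrow> bool" where
  "accepting F \<rho> \<longleftrightarrow> (\<exists>q\<in>F. \<exists>\<^sub>\<infinity>i. \<rho> i = q)"

definition lang :: "('q \<Rightarrow> 'a \<Rightarrow> 'q set) \<Rightarrow> 'q set \<Rightarrow> 'q \<Rightarrow> 'a word set" where
  "lang \<delta> F q = {\<alpha>. \<exists>\<rho>. is_run \<delta> q \<alpha> \<rho> \<and> accepting F \<rho>}"

definition is_path :: "('q \<Rightarrow> 'a \<Rightarrow> 'q set) \<Rightarrow> 'q \<Rightarrow> 'a list \<Rightarrow> 'q \<Rightarrow> 'q list \<Rightarrow> bool" where
  "is_path \<delta> p w q rs \<longleftrightarrow> length rs = Suc (length w) \<and> rs ! 0 = p \<and> rs ! length w = q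
     \<and> (\<forall>i < length w. rs ! Suc i \<in> \<delta> (rs ! i) (w ! i))"

definition reach :: "('q \<Rightarrow> 'a \<Rightarrow> 'q set) \<Rightarrow> 'q \<Rightarrow> 'a list \<Rightarrow> 'q \<Rightarrow> bool" where
  "reach \<delta> p w q \<longleftrightarrow> (\<exists>rs. is_path \<delta> p w q rs)"

definition reachF :: "('q \<Rightarrow> 'a \<Rightarrow> 'q set) \<Rightarrow> 'q set \<Rightarrow> 'q \<Rightarrow> 'a list \<Rightarrow> 'q \<Rightarrow> bool" where
  "reachF \<delta> F p w q \<longleftrightarrow> (\<exists>rs. is_path \<delta> p w q rs \<and> (\<exists>r\<in>set rs. r \<in> F))"

definition lconc :: "'a list set \<Rightarrow> 'a list set \<Rightarrow> 'a list set" where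
  "lconc L1 L2 = {w1 @ w2 | w1 w2. w1 \<in> L1 \<and> w2 \<in> L2}"

definition lstar :: "'a list set \<Rightarrow> 'a list set" where
  "lstar L = {concat ws | ws. set ws \<subseteq> L}"

text \<open>L^omega: infinite words that are infinite concatenations of words of L.
  Empty factors contribute nothing, so we take the factors nonempty.\<close>
definition lomega :: "'a list set \<Rightarrow> 'a word set" where
  "lomega L = {\<alpha>. \<exists>ws :: nat \<Rightarrow> 'a list. (\<forall>i. ws i \<in> L \<and> ws i \<noteq> []) \<and>
      (\<forall>n. prefix (length (concat (map ws [0..<n]))) \<alpha> = concat (map ws [0..<n]))}"

text \<open>Delayed simulation game with memoryless Duplicator strategies
  sigma r p a p' (Duplicator at r, Spoiler moved p -a-> p').\<close>
definition legal_strategy :: "('q \<Rightarrow> 'a \<Rightarrow> 'q set) \<Rightarrow> ('q \<Rightarrow> 'q \<Rightarrow> 'a \<Rightarrow> 'q \<Rightarrow> 'q) \<Rightarrow> bool" where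
  "legal_strategy \<delta> \<sigma> \<longleftrightarrow> (\<forall>r p a p'. p' \<in> \<delta> p a \<longrightarrow> \<sigma> r p a p' \<in> \<delta> r a)"

definition dup_play :: "('q \<Rightarrow> 'q \<Rightarrow> 'a \<Rightarrow> 'q \<Rightarrow> 'q) \<Rightarrow> 'q \<Rightarrow> 'q word \<Rightarrow> 'a word \<Rightarrow> 'q word" where
  "dup_play \<sigma> r ps \<alpha> = rec_nat r (\<lambda>i x. \<sigma> x (ps i) (\<alpha> i) (ps (Suc i)))"

definition winning_de :: "('q \<Rightarrow> 'a \<Rightarrow> 'q set) \<Rightarrow> 'q set \<Rightarrow> ('q \<Rightarrow> 'q \<Rightarrow> 'a \<Rightarrow> 'q \<Rightarrow> 'q) \<Rightarrow> 'q \<Rightarrow> 'q \<Rightarrow> bool" where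
  "winning_de \<delta> F \<sigma> p r \<longleftrightarrow> (\<forall>\<alpha> ps. is_run \<delta> p \<alpha> ps \<longrightarrow>
     (let rs = dup_play \<sigma> r ps \<alpha> in \<forall>i. ps i \<in> F \<longrightarrow> (\<exists>k\<ge>i. rs k \<in> F)))"

definition de_sim :: "('q \<Rightarrow> 'a \<Rightarrow> 'q set) \<Rightarrow> 'q set \<Rightarrow> 'q \<Rightarrow> 'q \<Rightarrow> bool" where
  "de_sim \<delta> F p r \<longleftrightarrow> (\<exists>\<sigma>. legal_strategy \<delta> \<sigma> \<and> winning_de \<delta> F \<sigma> p r)"

end

theory Submission
  imports Defs
begin

(* Cut the word into segments u_0 u_1 u_2 ... with p -u_j-> q for every j, infinitely many of them
   through F, and let b_j be the start of u_j.  Build a tower of runs: run 0 starts in q at time 0;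
   run j+1 starts in p at time b_j, follows a p-q path on u_j and thereafter, like every run below
   the current top, answers the run above it with Duplicator's strategy.  From time b_j on, runs
   j+1 and j therefore form a play of the delayed simulation game from (p, q), so each visit of
   run j+1 to F is followed by a visit of run j to F.  Pushing the infinitely many visits to F in
   the top segments down the tower makes run 0, a run from q on the whole word, accepting. *)

definition is_factorization :: "(nat \<Rightarrow> 'a list) \<Rightarrow> 'a word \<Rightarrow> bool" where
  "is_factorization ws \<alpha> \<longleftrightarrow>
     (\<forall>n. prefix (length (concat (map ws [0..<n]))) \<alpha> = concat (map ws [0..<n]))"

lemma lomega_iff_factorization:
  "\<alpha> \<in> lomega L \<longleftrightarrow> (\<exists>ws. (\<forall>i. ws i \<in> L \<and> ws i \<noteq> []) \<and> is_factorization ws \<alpha>)"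
  by (simp add: lomega_def is_factorization_def)

lemma prefix_eq_append_imp_prefix:
  assumes "prefix n \<alpha> = xs @ ys"
  shows "prefix (length xs) \<alpha> = xs"
proof -
  have "length xs \<le> n" using arg_cong[OF assms, of length] by simp
  then have "prefix (length xs) \<alpha> = take (length xs) (prefix n \<alpha>)" by (simp add: take_map)
  then show ?thesis using assms by simp
qed

lemma factorization_factor:
  assumes "is_factorization ws \<alpha>"
  shows "map \<alpha> [length (concat (map ws [0..<j]))..<length (concat (map ws [0..<Suc j]))] = ws j"
proof -
  let ?u = "concat (map ws [0..<j])"
  have "prefix (length (concat (map ws [0..<Suc j]))) \<alpha> = concat (map ws [0..<Suc j])"
    using assms unfolding is_factorization_def by blast
  then have "prefix (length ?u + length (ws j)) \<alpha> = ?u @ ws j" by simp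
  moreover have "prefix (length ?u + length (ws j)) \<alpha>
      = prefix (length ?u) \<alpha> @ map \<alpha> [length ?u..<length ?u + length (ws j)]"
    unfolding subsequence_def[symmetric] by (rule subsequence_append)
  moreover have "prefix (length ?u) \<alpha> = ?u"
    using assms unfolding is_factorization_def by blast
  ultimately show ?thesis by simp
qed

lemma idx_sequence_factor_starts:
  assumes "\<And>i. ws i \<noteq> []"
  shows "idx_sequence (\<lambda>j. length (concat (map ws [0..<j])))"
  using assms unfolding idx_sequence_def by simp

(* Enumerates the entries of xss 0, xss 1, ... in order: when all blocks are nonempty,
   the j-th entry already lies within the first j+1 blocks. *)
definition flat_seq :: "(nat \<Rightarrow> 'a list list) \<Rightarrow> nat \<Rightarrow> 'a list" where
  "flat_seq xss j = concat (map xss [0..<Suc j]) ! j"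

lemma concat_map_concat_upt:
  "concat (concat (map xss [0..<n])) = concat (map (\<lambda>i. concat (xss i)) [0..<n])"
  by (induction n) simp_all

lemma concat_map_upt_nth_mono:
  assumes "m \<le> n" "j < length (concat (map xss [0..<m]))"
  shows "concat (map xss [0..<n]) ! j = concat (map xss [0..<m]) ! j"
proof -
  have "[0..<n] = [0..<m] @ [m..<n]"
    using assms(1) by (metis le_add_diff_inverse upt_add_eq_append le0)
  then show ?thesis using assms(2) by (simp add: nth_append)
qed

context
  fixes xss :: "nat \<Rightarrow> 'a list list"
  assumes nonempty: "\<And>i. xss i \<noteq> []"
begin

lemma length_concat_map_upt_ge: "n \<le> length (concat (map xss [0..<n]))"
proof (induction n)
  case (Suc n)
  then show ?case using nonempty[of n] by (cases "xss n") auto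
qed simp

lemma concat_map_upt_nth:
  assumes "j < length (concat (map xss [0..<n]))"
  shows "concat (map xss [0..<n]) ! j = flat_seq xss j"
proof (cases "n \<le> Suc j")
  case True
  then show ?thesis using concat_map_upt_nth_mono[OF True assms] unfolding flat_seq_def by simp
next
  case False
  have "j < length (concat (map xss [0..<Suc j]))"
    using length_concat_map_upt_ge[of "Suc j"] by simp
  moreover have "Suc j \<le> n" using False by simp
  ultimately show ?thesis unfolding flat_seq_def by (intro concat_map_upt_nth_mono)
qed

lemma map_flat_seq_upt:
  "map (flat_seq xss) [0..<length (concat (map xss [0..<n]))] = concat (map xss [0..<n])"
  by (rule nth_equalityI) (simp_all add: concat_map_upt_nth)

lemma factorization_flat_seq:
  assumes "is_factorization (\<lambda>i. concat (xss i)) \<alpha>"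
  shows "is_factorization (flat_seq xss) \<alpha>"
  unfolding is_factorization_def
proof
  fix m
  let ?xs = "concat (map xss [0..<m])"
  have "map (flat_seq xss) [0..<m] = take m ?xs"
    using length_concat_map_upt_ge[of m] map_flat_seq_upt[of m] by (metis take_map take_upt add_0)
  moreover have "prefix (length (concat ?xs)) \<alpha> = concat (take m ?xs) @ concat (drop m ?xs)"
    using assms unfolding is_factorization_def
    by (metis concat_map_concat_upt append_take_drop_id concat_append)
  ultimately show "prefix (length (concat (map (flat_seq xss) [0..<m]))) \<alpha>
      = concat (map (flat_seq xss) [0..<m])"
    by (simp add: prefix_eq_append_imp_prefix)
qed

lemma flat_seq_in_factors: "\<exists>i. flat_seq xss j \<in> set (xss i)"
proof -
  have "j < length (concat (map xss [0..<Suc j]))"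
    using length_concat_map_upt_ge[of "Suc j"] by simp
  then have "flat_seq xss j \<in> set (concat (map xss [0..<Suc j]))"
    unfolding flat_seq_def by (rule nth_mem)
  then show ?thesis by auto
qed

lemma INFM_flat_seq_last:
  assumes "\<And>i. Q (last (xss i))"
  shows "\<exists>\<^sub>\<infinity>j. Q (flat_seq xss j)"
  unfolding INFM_nat_le
proof
  fix m
  let ?xs = "concat (map xss [0..<Suc m])"
  have len: "Suc m \<le> length ?xs" by (rule length_concat_map_upt_ge)
  have "flat_seq xss (length ?xs - 1) = ?xs ! (length ?xs - 1)"
    using len by (intro concat_map_upt_nth[symmetric]) simp
  also have "\<dots> = last ?xs" using nonempty[of m] by (intro last_conv_nth[symmetric]) auto
  also have "\<dots> = last (xss m)" using nonempty[of m] by simp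
  finally have "Q (flat_seq xss (length ?xs - 1))" using assms by simp
  moreover have "m \<le> length ?xs - 1" using len by simp
  ultimately show "\<exists>j\<ge>m. Q (flat_seq xss j)" by blast
qed

end

lemma accepting_iff_INFM:
  assumes "finite F"
  shows "accepting F \<rho> \<longleftrightarrow> (\<exists>\<^sub>\<infinity>n. \<rho> n \<in> F)"
  using INFM_finite_Bex_distrib[OF assms, of "\<lambda>x n. \<rho> n = x"] unfolding accepting_def by simp

lemma is_path_step:
  "is_path \<delta> p w q rs \<Longrightarrow> i < length w \<Longrightarrow> rs ! Suc i \<in> \<delta> (rs ! i) (w ! i)"
  unfolding is_path_def by blast

lemma reach_if_reachF: "reachF \<delta> F p w q \<Longrightarrow> reach \<delta> p w q"
  unfolding reach_def reachF_def by blast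

lemma reachF_if_reach_final:
  assumes "reach \<delta> p w q" "q \<in> F"
  shows "reachF \<delta> F p w q"
proof -
  obtain rs where "is_path \<delta> p w q rs" using assms(1) unfolding reach_def by blast
  moreover have "rs ! length w \<in> set rs" "rs ! length w = q"
    using calculation unfolding is_path_def by auto
  ultimately show ?thesis using assms(2) unfolding reachF_def by metis
qed

lemma reachF_Nil: "reachF \<delta> F p [] q \<Longrightarrow> p = q \<and> q \<in> F"
  unfolding reachF_def is_path_def by (auto simp: length_Suc_conv)

lemma winning_de_response:
  assumes "winning_de \<delta> F \<sigma> p r" "is_run \<delta> p \<beta> \<rho>"
    and "\<rho>' 0 = r" "\<And>m. \<rho>' (Suc m) = \<sigma> (\<rho>' m) (\<rho> m) (\<beta> m) (\<rho> (Suc m))"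
    and "\<rho> i \<in> F"
  shows "\<exists>k\<ge>i. \<rho>' k \<in> F"
proof -
  have "dup_play \<sigma> r \<rho> \<beta> = \<rho>'"
  proof
    show "dup_play \<sigma> r \<rho> \<beta> m = \<rho>' m" for m
      by (induction m) (simp_all add: dup_play_def assms(3,4))
  qed
  then show ?thesis using assms(1,2,5) unfolding winning_de_def Let_def by metis
qed

locale simulation_tower =
  fixes \<delta> :: "'q \<Rightarrow> 'a \<Rightarrow> 'q set" and F :: "'q set" and p q :: 'q
    and \<sigma> :: "'q \<Rightarrow> 'q \<Rightarrow> 'a \<Rightarrow> 'q \<Rightarrow> 'q" and \<alpha> :: "'a word"
    and b :: "nat \<Rightarrow> nat" and P :: "nat \<Rightarrow> 'q list"
  assumes legal: "legal_strategy \<delta> \<sigma>"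
    and win: "winning_de \<delta> F \<sigma> p q"
    and idx: "idx_sequence b"
    and path: "\<And>j. is_path \<delta> p (map \<alpha> [b j..<b (Suc j)]) q (P j)"
begin

lemma b_Suc_gt: "b j < b (Suc j)"
  using idx unfolding idx_sequence_def by blast

lemma b_mono: "i \<le> j \<Longrightarrow> b i \<le> b j"
  by (rule idx_sequence_mono[OF idx])

lemma le_b: "j \<le> b j"
  using idx unfolding idx_sequence_def
  by (simp add: strict_mono_Suc_iff[symmetric] strict_mono_imp_increasing)

definition seg :: "nat \<Rightarrow> nat" where
  "seg n = (THE j. n \<in> {b j..<b (Suc j)})"

lemma seg_eq: "n \<in> {b j..<b (Suc j)} \<Longrightarrow> seg n = j"
  unfolding seg_def using idx_sequence_interval_unique[OF idx] by blast

lemma seg_bounds: "b (seg n) \<le> n" "n < b (Suc (seg n))"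
  using theI'[OF idx_sequence_unique_interval[OF idx, of n]] unfolding seg_def by auto

lemma le_seg_iff: "j \<le> seg n \<longleftrightarrow> b j \<le> n"
proof
  show "j \<le> seg n \<Longrightarrow> b j \<le> n" using b_mono seg_bounds(1) le_trans by blast
  show "b j \<le> n \<Longrightarrow> j \<le> seg n"
  proof (rule ccontr)
    assume "b j \<le> n" "\<not> j \<le> seg n"
    then have "b (Suc (seg n)) \<le> n" using b_mono[of "Suc (seg n)" j] by simp
    then show False using seg_bounds(2)[of n] by simp
  qed
qed

(* level k n is the state of run k of the tower at time n.  At time n+1 the top run is
   Suc (seg n), following P (seg n); the runs below answer by the strategy from the top
   down; runs not yet started wait in p. *)
function level :: "nat \<Rightarrow> nat \<Rightarrow> 'q" where
  "level k 0 = (if k = 0 then q else p)"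
| "level k (Suc n) =
     (if k = Suc (seg n) then P (seg n) ! (Suc n - b (seg n))
      else if k \<le> seg n then \<sigma> (level k n) (level (Suc k) n) (\<alpha> n) (level (Suc k) (Suc n))
      else p)"
  by pat_completeness auto
termination by (relation "measures [\<lambda>(k, n). n, \<lambda>(k, n). Suc (seg (n - 1)) - k]") auto

(* As a simp rule the second equation would keep unfolding level (Suc k) (Suc n). *)
declare level.simps(2) [simp del]

lemma level_Suc_top: "level (Suc (seg n)) (Suc n) = P (seg n) ! (Suc n - b (seg n))"
  by (simp add: level.simps(2))

lemma level_Suc_above: "Suc (seg n) < k \<Longrightarrow> level k (Suc n) = p"
  by (simp add: level.simps(2))

lemma level_response:
  "b j \<le> n \<Longrightarrow> level j (Suc n) = \<sigma> (level j n) (level (Suc j) n) (\<alpha> n) (level (Suc j) (Suc n))"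
  using le_seg_iff[of j n] by (simp add: level.simps(2))

lemma level_start: "level (Suc j) (b j) = p"
proof (cases j)
  case 0
  then show ?thesis using idx unfolding idx_sequence_def by simp
next
  case (Suc i)
  then obtain n where n: "b j = Suc n" using b_Suc_gt[of i] by (cases "b j") auto
  then have "seg n = i" using b_Suc_gt[of i] Suc by (intro seg_eq) auto
  then show ?thesis using n Suc level_Suc_above[of n "Suc j"] by simp
qed

lemma level_top:
  assumes "b j \<le> n" "n \<le> b (Suc j)"
  shows "level (Suc j) n = P j ! (n - b j)"
proof (cases "n = b j")
  case True
  then show ?thesis using level_start path[of j] unfolding is_path_def by simp
next
  case False
  then obtain m where m: "n = Suc m" "b j \<le> m" "m < b (Suc j)"
    using assms by (cases n) auto
  then have "seg m = j" by (intro seg_eq) auto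
  then show ?thesis using m level_Suc_top[of m] by simp
qed

lemma level_boundary: "level j (b j) = q"
proof (cases j)
  case 0
  then show ?thesis using idx unfolding idx_sequence_def by simp
next
  case (Suc i)
  then show ?thesis
    using level_top[of i "b j"] b_Suc_gt[of i] path[of i] unfolding is_path_def by simp
qed

lemma level_step: "k \<le> Suc (seg n) \<Longrightarrow> level k (Suc n) \<in> \<delta> (level k n) (\<alpha> n)"
proof (induction "Suc (seg n) - k" arbitrary: k)
  case 0
  let ?j = "seg n"
  have k: "k = Suc ?j" using 0 by simp
  have i: "n - b ?j < length (map \<alpha> [b ?j..<b (Suc ?j)])" using seg_bounds[of n] by simp
  have "level k (Suc n) = P ?j ! Suc (n - b ?j)"
    using k seg_bounds(1)[of n] level_Suc_top[of n] by (simp add: Suc_diff_le)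
  moreover have "level k n = P ?j ! (n - b ?j)"
    unfolding k using seg_bounds[of n] by (intro level_top) auto
  moreover have "map \<alpha> [b ?j..<b (Suc ?j)] ! (n - b ?j) = \<alpha> n" using seg_bounds[of n] by simp
  ultimately show ?case using is_path_step[OF path i] by simp
next
  case (Suc d)
  then have "k \<le> seg n" by simp
  then have "b k \<le> n" "Suc k \<le> Suc (seg n)" using le_seg_iff by auto
  then show ?case
    using Suc.hyps(1)[of "Suc k"] Suc.hyps(2) level_response legal unfolding legal_strategy_def by simp
qed

lemma level_delay:
  assumes "b j \<le> t" "level (Suc j) t \<in> F"
  shows "\<exists>t'\<ge>t. level j t' \<in> F"
proof -
  have "is_run \<delta> p (suffix (b j) \<alpha>) (\<lambda>m. level (Suc j) (b j + m))"
    unfolding is_run_def using level_start level_step le_seg_iff by simp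
  then obtain k where "k \<ge> t - b j" "level j (b j + k) \<in> F"
    using winning_de_response[OF win, of "suffix (b j) \<alpha>" "\<lambda>m. level (Suc j) (b j + m)"
        "\<lambda>m. level j (b j + m)" "t - b j"]
    using assms level_boundary level_response by auto
  then show ?thesis using assms(1) by (intro exI[of _ "b j + k"]) auto
qed

lemma level_reaches_bottom:
  "b j \<le> t \<Longrightarrow> level (Suc j) t \<in> F \<Longrightarrow> \<exists>t'\<ge>t. level 0 t' \<in> F"
proof (induction j arbitrary: t)
  case 0
  then show ?case by (rule level_delay)
next
  case (Suc j)
  then obtain t' where "t' \<ge> t" "level (Suc j) t' \<in> F" using level_delay by blast
  moreover have "b j \<le> t'" using Suc.prems(1) b_mono[of j "Suc j"] calculation(1) by simp
  ultimately show ?case using Suc.IH by (meson order_trans)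
qed

lemma is_run_level0: "is_run \<delta> q \<alpha> (level 0)"
  unfolding is_run_def using level_step by simp

lemma INFM_level0_in_F:
  assumes "\<exists>\<^sub>\<infinity>j. \<exists>r\<in>set (P j). r \<in> F"
  shows "\<exists>\<^sub>\<infinity>t. level 0 t \<in> F"
  unfolding INFM_nat_le
proof
  fix m
  obtain j where j: "j \<ge> m" "\<exists>r\<in>set (P j). r \<in> F" using assms unfolding INFM_nat_le by blast
  then obtain i where i: "i < length (P j)" "P j ! i \<in> F" by (metis in_set_conv_nth)
  have "length (P j) = Suc (b (Suc j) - b j)" using path[of j] unfolding is_path_def by simp
  then have "level (Suc j) (b j + i) \<in> F" using i level_top[of j "b j + i"] b_Suc_gt[of j] by simp
  then obtain t where "t \<ge> b j + i" "level 0 t \<in> F" using level_reaches_bottom[of j "b j + i"] by auto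
  then show "\<exists>t\<ge>m. level 0 t \<in> F" using j(1) le_b[of j] by (intro exI[of _ t]) auto
qed

end

lemma lang_if_path_factorization:
  assumes "de_sim \<delta> F p q" "finite F"
    and "is_factorization ws \<alpha>"
    and "\<And>j. ws j \<noteq> [] \<and> reach \<delta> p (ws j) q"
    and "\<exists>\<^sub>\<infinity>j. reachF \<delta> F p (ws j) q"
  shows "\<alpha> \<in> lang \<delta> F q"
proof -
  obtain \<sigma> where \<sigma>: "legal_strategy \<delta> \<sigma>" "winning_de \<delta> F \<sigma> p q"
    using assms(1) unfolding de_sim_def by blast
  define b where "b j = length (concat (map ws [0..<j]))" for j
  have "\<exists>rs. is_path \<delta> p (ws j) q rs \<and> (reachF \<delta> F p (ws j) q \<longrightarrow> (\<exists>r\<in>set rs. r \<in> F))" for j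
  proof (cases "reachF \<delta> F p (ws j) q")
    case True
    then show ?thesis unfolding reachF_def by blast
  next
    case False
    then show ?thesis using assms(4)[of j] unfolding reach_def by blast
  qed
  then obtain P where P: "\<And>j. is_path \<delta> p (ws j) q (P j)"
    "\<And>j. reachF \<delta> F p (ws j) q \<Longrightarrow> \<exists>r\<in>set (P j). r \<in> F"
    by metis
  interpret simulation_tower \<delta> F p q \<sigma> \<alpha> b P
  proof
    show "idx_sequence b" unfolding b_def using assms(4) by (intro idx_sequence_factor_starts) blast
    show "is_path \<delta> p (map \<alpha> [b j..<b (Suc j)]) q (P j)" for j
      unfolding b_def factorization_factor[OF assms(3)] by (rule P(1))
  qed (use \<sigma> in auto)
  have "\<exists>\<^sub>\<infinity>j. \<exists>r\<in>set (P j). r \<in> F" using assms(5) P(2) by (rule INFM_mono)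
  then have "accepting F (level 0)" using INFM_level0_in_F accepting_iff_INFM[OF assms(2)] by blast
  then show ?thesis using is_run_level0 unfolding lang_def by blast
qed

lemma split_into_paths:
  assumes "w \<in> lconc (lstar {w. reach \<delta> p w q}) {w. reachF \<delta> F p w q}" "w \<noteq> []"
  shows "\<exists>xs. xs \<noteq> [] \<and> (\<forall>s\<in>set xs. s \<noteq> [] \<and> reach \<delta> p s q)
    \<and> reachF \<delta> F p (last xs) q \<and> concat xs = w"
proof -
  obtain us v where w: "w = concat us @ v" and us: "set us \<subseteq> {u. reach \<delta> p u q}"
    and v: "reachF \<delta> F p v q"
    using assms(1) unfolding lconc_def lstar_def by blast
  define us' where "us' = filter (\<lambda>u. u \<noteq> []) us"
  have us': "\<forall>u\<in>set us'. u \<noteq> [] \<and> reach \<delta> p u q"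
    using us unfolding us'_def by auto
  have "concat us' = concat us"
    unfolding us'_def by (induction us) auto
  show ?thesis
  proof (cases "v = []")
    case False
    then show ?thesis
      using us' v reach_if_reachF[OF v] w \<open>concat us' = concat us\<close>
      by (intro exI[of _ "us' @ [v]"]) auto
  next
    case True
    then have "q \<in> F" using reachF_Nil[of \<delta> F p q] v by simp
    have "us' \<noteq> []" using assms(2) w True \<open>concat us' = concat us\<close> by auto
    then have "reachF \<delta> F p (last us') q" using us' \<open>q \<in> F\<close> by (intro reachF_if_reach_final) auto
    then show ?thesis using \<open>us' \<noteq> []\<close> us' w True \<open>concat us' = concat us\<close> by auto
  qed
qed

theorem lemma10:
  fixes \<delta> :: "'q::finite \<Rightarrow> 'a::finite \<Rightarrow> 'q set" and F :: "'q set" and p q :: 'q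
  assumes "complete_aut \<delta>"
    and "de_sim \<delta> F p q"
  shows "lomega (lconc (lstar {w. reach \<delta> p w q}) {w. reachF \<delta> F p w q}) \<subseteq> lang \<delta> F q"
proof
  fix \<alpha> assume "\<alpha> \<in> lomega (lconc (lstar {w. reach \<delta> p w q}) {w. reachF \<delta> F p w q})"
  then obtain ws where ws: "\<And>i. ws i \<in> lconc (lstar {w. reach \<delta> p w q}) {w. reachF \<delta> F p w q}"
    "\<And>i. ws i \<noteq> []" and fact: "is_factorization ws \<alpha>"
    unfolding lomega_iff_factorization by blast
  obtain xss where xss: "\<And>i. xss i \<noteq> []" "\<And>i. \<forall>s\<in>set (xss i). s \<noteq> [] \<and> reach \<delta> p s q"
    "\<And>i. reachF \<delta> F p (last (xss i)) q" "\<And>i. concat (xss i) = ws i"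
    using split_into_paths[OF ws] by metis
  have "is_factorization (flat_seq xss) \<alpha>"
    using xss(1) fact by (intro factorization_flat_seq) (simp_all add: xss(4))
  moreover have "flat_seq xss j \<noteq> [] \<and> reach \<delta> p (flat_seq xss j) q" for j
    using flat_seq_in_factors[of xss j] xss(1,2) by blast
  moreover have "\<exists>\<^sub>\<infinity>j. reachF \<delta> F p (flat_seq xss j) q"
    using xss(1,3) by (rule INFM_flat_seq_last)
  ultimately show "\<alpha> \<in> lang \<delta> F q" using assms(2) by (intro lang_if_path_factorization) simp_all
qed

end
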